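(* Let $A\subset\mathbb{N}_0$ be such that $A^2+A=\mathbb{N}_0$. Then (a) $\alpha_A\ge 1/3$; (b) $\beta_A\ge 1/2$; (c) $\alpha_A+\beta_A\ge 1$.
   Context: $\mathbb{N}_0$ is the set of nonnegative integers; $A^2=\{ab:a,b\in A\}$, $A^2+A=\{x+y:x\in A^2,y\in A\}$; $A(X)=|A\cap[1,X]|$. For $A\subset\mathbb{N}_0$, $$\alpha_A=\inf\Big\{t\ge 0: \liminf_{X\to\infty}\frac{A(X)}{X^t}<\infty\Big\},\qquad \beta_A=\inf\Big\{t\ge 0: \limsup_{X\to\infty}\frac{A(X)}{X^t}<\infty\Big\}.$$ *)

theory Defs
  imports "HOL-Analysis.Analysis" "HOL-Library.Liminf_Limsup"
begin

definition prodset :: "nat set \<Rightarrow> nat set" where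
  "prodset A = {a * b | a b. a \<in> A \<and> b \<in> A}"

definition sumset :: "nat set \<Rightarrow> nat set \<Rightarrow> nat set" where
  "sumset B C = {x + y | x y. x \<in> B \<and> y \<in> C}"

definition count_fn :: "nat set \<Rightarrow> real \<Rightarrow> nat" where
  "count_fn A X = card {n \<in> A. 1 \<le> n \<and> real n \<le> X}"

definition lower_exp :: "nat set \<Rightarrow> real" where
  "lower_exp A = Inf {t. t \<ge> 0 \<and>
      Liminf at_top (\<lambda>X. ereal (real (count_fn A X) / X powr t)) < \<infinity>}"

definition upper_exp :: "nat set \<Rightarrow> real" where
  "upper_exp A = Inf {t. t \<ge> 0 \<and>
      Limsup at_top (\<lambda>X. ereal (real (count_fn A X) / X powr t)) < \<infinity>}"

end

theory Submission
  imports Defs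
begin

(*
  Every n <= N is p + c with p in A^2 and c in A, both at most N, so
  N + 1 <= (P(N) + 1) (A(N) + 1), where P(N) counts the nonzero products up to N.
  Trivially P(N) <= A(N)^2, so along a sequence X -> oo with A(X) = O(X^s) we get
  X = O(X^(3s)), which forces s >= 1/3.  If moreover A(X) <= C X^t for all X >= 1,
  sorting the products ab <= N by the range N^(i/K) <= a <= N^((i+1)/K), so that
  b <= N^(1-i/K), gives P(N) <= K C^2 N^(t(1+1/K)); hence s + t(1 + 1/K) >= 1 for
  every K.  Finally alpha <= beta turns alpha + beta >= 1 into beta >= 1/2.
*)

abbreviation count_ratio :: "nat set \<Rightarrow> real \<Rightarrow> real \<Rightarrow> ereal" where
  "count_ratio A t \<equiv> \<lambda>X. ereal (real (count_fn A X) / X powr t)"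

lemma count_fn_eq_card: "count_fn A X = card (A \<inter> {1..nat \<lfloor>X\<rfloor>})"
proof -
  have "{n \<in> A. 1 \<le> n \<and> real n \<le> X} = A \<inter> {1..nat \<lfloor>X\<rfloor>}"
    by (auto simp: le_nat_floor) linarith
  then show ?thesis
    by (simp add: count_fn_def)
qed

lemma count_fn_mono: "X \<le> Y \<Longrightarrow> count_fn A X \<le> count_fn A Y"
proof -
  assume "X \<le> Y"
  then have "nat \<lfloor>X\<rfloor> \<le> nat \<lfloor>Y\<rfloor>"
    by (intro nat_mono floor_mono)
  then show ?thesis
    unfolding count_fn_eq_card by (intro card_mono) auto
qed

lemma count_fn_le: "0 \<le> X \<Longrightarrow> real (count_fn A X) \<le> X"
proof -
  assume "0 \<le> X"
  have "count_fn A X \<le> card {1..nat \<lfloor>X\<rfloor>}"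
    unfolding count_fn_eq_card by (intro card_mono) auto
  with \<open>0 \<le> X\<close> show ?thesis
    by simp linarith
qed

lemma Limsup_count_ratio_one: "Limsup at_top (count_ratio A 1) < \<infinity>"
proof -
  have "\<forall>\<^sub>F X in at_top. count_ratio A 1 X \<le> ereal 1"
    using eventually_ge_at_top[of "1::real"]
  proof eventually_elim
    case (elim X)
    then show ?case
      using count_fn_le[of X A] by simp
  qed
  then have "Limsup at_top (count_ratio A 1) \<le> ereal 1"
    by (rule Limsup_bounded)
  then show ?thesis
    by (rule le_less_trans) simp
qed

lemma Liminf_less_infinity_if_Limsup:
  "Limsup at_top (count_ratio A t) < \<infinity> \<Longrightarrow> Liminf at_top (count_ratio A t) < \<infinity>"
  by (rule le_less_trans[OF Liminf_le_Limsup]) simp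

lemma lower_exp_le_upper_exp: "lower_exp A \<le> upper_exp A"
  unfolding lower_exp_def upper_exp_def
proof (rule cInf_superset_mono)
  show "{t. 0 \<le> t \<and> Limsup at_top (count_ratio A t) < \<infinity>} \<noteq> {}"
    using Limsup_count_ratio_one[of A] by (auto intro!: exI[of _ 1])
  show "bdd_below {t. 0 \<le> t \<and> Liminf at_top (count_ratio A t) < \<infinity>}"
    by (rule bdd_belowI[of _ 0]) auto
qed (use Liminf_less_infinity_if_Limsup in blast)

lemma le_lower_exp:
  assumes "\<And>s. 0 \<le> s \<Longrightarrow> Liminf at_top (count_ratio A s) < \<infinity> \<Longrightarrow> c \<le> s"
  shows "c \<le> lower_exp A"
  unfolding lower_exp_def
proof (rule cInf_greatest)
  show "{s. 0 \<le> s \<and> Liminf at_top (count_ratio A s) < \<infinity>} \<noteq> {}"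
    using Liminf_less_infinity_if_Limsup[OF Limsup_count_ratio_one, of A] by (auto intro!: exI[of _ 1])
qed (use assms in auto)

lemma le_upper_exp:
  assumes "\<And>t. 0 \<le> t \<Longrightarrow> Limsup at_top (count_ratio A t) < \<infinity> \<Longrightarrow> c \<le> t"
  shows "c \<le> upper_exp A"
  unfolding upper_exp_def
proof (rule cInf_greatest)
  show "{t. 0 \<le> t \<and> Limsup at_top (count_ratio A t) < \<infinity>} \<noteq> {}"
    using Limsup_count_ratio_one[of A] by (auto intro!: exI[of _ 1])
qed (use assms in auto)

lemma le_lower_exp_plus_upper_exp:
  assumes "\<And>s t. 0 \<le> s \<Longrightarrow> 0 \<le> t \<Longrightarrow> Liminf at_top (count_ratio A s) < \<infinity> \<Longrightarrow>
      Limsup at_top (count_ratio A t) < \<infinity> \<Longrightarrow> c \<le> s + t"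
  shows "c \<le> lower_exp A + upper_exp A"
proof -
  have "c - upper_exp A \<le> lower_exp A"
  proof (rule le_lower_exp)
    fix s assume s: "0 \<le> s" "Liminf at_top (count_ratio A s) < \<infinity>"
    have "c - s \<le> upper_exp A"
    proof (rule le_upper_exp)
      fix t assume "0 \<le> t" "Limsup at_top (count_ratio A t) < \<infinity>"
      with s show "c - s \<le> t"
        using assms by fastforce
    qed
    then show "c - upper_exp A \<le> s"
      by linarith
  qed
  then show ?thesis
    by linarith
qed

lemma Limsup_count_ratio_finiteD:
  assumes "Limsup at_top (count_ratio A t) < \<infinity>" and "0 \<le> t"
  obtains C where "\<And>X. 1 \<le> X \<Longrightarrow> real (count_fn A X) \<le> C * X powr t"
proof -
  have "Limsup at_top (count_ratio A t) \<noteq> \<infinity>"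
    using assms(1) by simp
  then obtain B :: nat where "Limsup at_top (count_ratio A t) < ereal B"
    unfolding less_PInf_Ex_of_nat by blast
  then have "\<forall>\<^sub>F X in at_top. count_ratio A t X < ereal B"
    by (rule Limsup_lessD)
  then obtain X0 where X0: "\<And>X. X0 \<le> X \<Longrightarrow> real (count_fn A X) / X powr t < B"
    unfolding eventually_at_top_linorder by auto
  define C where "C = max B (count_fn A X0)"
  have "real (count_fn A X) \<le> C * X powr t" if "1 \<le> X" for X
  proof -
    have "1 \<le> X powr t"
      using that \<open>0 \<le> t\<close> by (rule ge_one_powr_ge_zero)
    have "B \<le> C" and "0 \<le> C" and "real (count_fn A X0) \<le> C"
      unfolding C_def by auto
    show ?thesis
    proof (cases "X0 \<le> X")
      case True
      then have "real (count_fn A X) / X powr t < B"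
        by (rule X0)
      moreover have "0 < X powr t"
        using \<open>1 \<le> X powr t\<close> by linarith
      ultimately have "real (count_fn A X) \<le> B * X powr t"
        by (simp add: pos_divide_less_eq)
      also have "\<dots> \<le> C * X powr t"
        using \<open>1 \<le> X powr t\<close> \<open>B \<le> C\<close> by (intro mult_right_mono) auto
      finally show ?thesis .
    next
      case False
      then have "real (count_fn A X) \<le> C"
        using count_fn_mono[of X X0 A] \<open>real (count_fn A X0) \<le> C\<close> by linarith
      also have "\<dots> \<le> C * X powr t"
        using mult_left_mono[of 1 "X powr t" C] \<open>1 \<le> X powr t\<close> \<open>0 \<le> C\<close> by simp
      finally show ?thesis .
    qed
  qed
  then show thesis
    by (rule that)
qed

lemma Liminf_count_ratio_finiteD:
  assumes "Liminf at_top (count_ratio A s) < \<infinity>"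
  obtains D where "\<exists>\<^sub>F X in at_top. real (count_fn A X) \<le> D * X powr s"
proof -
  have "Liminf at_top (count_ratio A s) \<noteq> \<infinity>"
    using assms by simp
  then obtain B :: nat where B: "Liminf at_top (count_ratio A s) < ereal B"
    unfolding less_PInf_Ex_of_nat by blast
  have "\<not> (\<forall>\<^sub>F X in at_top. ereal B \<le> count_ratio A s X)"
  proof
    assume "\<forall>\<^sub>F X in at_top. ereal B \<le> count_ratio A s X"
    then have "ereal B \<le> Liminf at_top (count_ratio A s)"
      by (rule Liminf_bounded)
    with B show False
      by simp
  qed
  then have "\<exists>\<^sub>F X in at_top. real (count_fn A X) / X powr s < B"
    by (simp add: not_eventually not_le)
  moreover have "\<forall>\<^sub>F X in at_top. (0::real) < X"
    by (rule eventually_gt_at_top)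
  ultimately have "\<exists>\<^sub>F X in at_top. real (count_fn A X) \<le> B * X powr s"
    by (rule frequently_elim1[OF frequently_eventually_conj])
      (auto simp: pos_divide_less_eq intro!: less_imp_le)
  then show thesis
    by (rule that)
qed

lemma not_frequently_if_sublinear:
  fixes e E :: real
  assumes "e < 1" and "\<And>X. 1 \<le> X \<Longrightarrow> P X \<Longrightarrow> X \<le> E * X powr e"
  shows "\<not> (\<exists>\<^sub>F X in at_top. P X)"
proof -
  have "(\<lambda>X. X powr e) \<in> o(\<lambda>X. X powr 1)"
    using \<open>e < 1\<close> by (subst powr_smallo_iff) (auto simp: filterlim_ident)
  then have "(\<lambda>X. E * X powr e) \<in> o(\<lambda>X. X)"
    by simp
  then have "\<forall>\<^sub>F X in at_top. norm (E * X powr e) \<le> 1/2 * norm X"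
    by (rule landau_o.smallD) simp
  with eventually_ge_at_top[of "1::real"] have "\<forall>\<^sub>F X in at_top. \<not> P X"
  proof eventually_elim
    case (elim X)
    then have "E * X powr e < X"
      by simp
    with elim(1) show "\<not> P X"
      using assms(2) by force
  qed
  then show ?thesis
    by (simp add: not_frequently)
qed

lemma prodset_upto_factorsE:
  assumes "x \<in> prodset A \<inter> {1..N}"
  obtains a b where "x = a * b" "a \<in> A \<inter> {1..N}" "b \<in> A \<inter> {1..N}"
proof -
  obtain a b where ab: "x = a * b" "a \<in> A" "b \<in> A"
    using assms unfolding prodset_def by blast
  with assms have "1 \<le> a" "1 \<le> b"
    by (auto simp: Suc_le_eq)
  then have "a \<le> a * b" "b \<le> a * b"
    using mult_le_mono2[of 1 b a] mult_le_mono1[of 1 a b] by simp_all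
  moreover have "a * b \<le> N"
    using ab(1) assms by simp
  ultimately have "a \<le> N" "b \<le> N"
    by linarith+
  with ab \<open>1 \<le> a\<close> \<open>1 \<le> b\<close> show thesis
    by (intro that[of a b]) auto
qed

lemma card_prodset_upto_le_square: "card (prodset A \<inter> {1..N}) \<le> card (A \<inter> {1..N}) ^ 2"
proof -
  let ?S = "A \<inter> {1..N}"
  have "prodset A \<inter> {1..N} \<subseteq> (\<lambda>(a, b). a * b) ` (?S \<times> ?S)"
  proof
    fix x assume "x \<in> prodset A \<inter> {1..N}"
    then obtain a b where "x = a * b" "a \<in> ?S" "b \<in> ?S"
      by (rule prodset_upto_factorsE)
    then show "x \<in> (\<lambda>(a, b). a * b) ` (?S \<times> ?S)"
      by force
  qed
  then have "card (prodset A \<inter> {1..N}) \<le> card ((\<lambda>(a, b). a * b) ` (?S \<times> ?S))"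
    by (intro card_mono) auto
  also have "\<dots> \<le> card (?S \<times> ?S)"
    by (rule card_image_le) simp
  finally show ?thesis
    by (simp add: card_cartesian_product power2_eq_square)
qed

lemma card_upto_le_sumset_prodset:
  assumes "{..N} \<subseteq> sumset (prodset A) A"
  shows "N + 1 \<le> (card (prodset A \<inter> {1..N}) + 1) * (card (A \<inter> {1..N}) + 1)"
proof -
  let ?P = "insert 0 (prodset A \<inter> {1..N})" and ?S = "insert 0 (A \<inter> {1..N})"
  have "{..N} \<subseteq> (\<lambda>(p, c). p + c) ` (?P \<times> ?S)"
  proof
    fix n assume "n \<in> {..N}"
    with assms obtain p c where "n = p + c" "p \<in> prodset A" "c \<in> A"
      unfolding sumset_def by blast
    with \<open>n \<in> {..N}\<close> have "p \<in> ?P" "c \<in> ?S"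
      by auto
    with \<open>n = p + c\<close> show "n \<in> (\<lambda>(p, c). p + c) ` (?P \<times> ?S)"
      by force
  qed
  then have "card {..N} \<le> card ((\<lambda>(p, c). p + c) ` (?P \<times> ?S))"
    by (intro card_mono) auto
  also have "\<dots> \<le> card (?P \<times> ?S)"
    by (rule card_image_le) simp
  also have "\<dots> = card ?P * card ?S"
    by (rule card_cartesian_product)
  also have "\<dots> \<le> (card (prodset A \<inter> {1..N}) + 1) * (card (A \<inter> {1..N}) + 1)"
    by (intro mult_le_mono) (simp_all add: card_insert_if)
  finally show ?thesis
    by simp
qed

lemma exists_bracketing_step:
  fixes g :: "nat \<Rightarrow> 'a :: linorder"
  assumes "g 0 \<le> x" and "x \<le> g K" and "0 < K"
  shows "\<exists>i<K. g i \<le> x \<and> x \<le> g (Suc i)"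
  using assms
proof (induction K)
  case 0
  then show ?case by simp
next
  case (Suc K)
  show ?case
  proof (cases "0 < K \<and> x \<le> g K")
    case True
    with Suc.IH \<open>g 0 \<le> x\<close> show ?thesis
      using less_SucI by blast
  next
    case False
    with Suc.prems have "g K \<le> x"
      by (cases "K = 0") auto
    with Suc.prems show ?thesis
      by blast
  qed
qed

lemma prodset_upto_subset_UN:
  fixes K N :: nat
  assumes "0 < K" and "1 \<le> N"
  shows "prodset A \<inter> {1..N} \<subseteq> (\<Union>i<K. (\<lambda>(a, b). a * b) `
           ((A \<inter> {1..nat \<lfloor>real N powr (real (Suc i) / K)\<rfloor>}) \<times>
            (A \<inter> {1..nat \<lfloor>real N powr (1 - real i / K)\<rfloor>})))"
proof
  fix x assume x: "x \<in> prodset A \<inter> {1..N}"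
  then obtain a b where ab: "x = a * b" "a \<in> A \<inter> {1..N}" "b \<in> A \<inter> {1..N}"
    by (rule prodset_upto_factorsE)
  from x ab(1) have "a * b \<le> N"
    by simp
  define g where "g i = real N powr (real i / K)" for i
  have "g 0 \<le> a" "a \<le> g K"
    using ab(2) \<open>0 < K\<close> \<open>1 \<le> N\<close> by (auto simp: g_def)
  then obtain i where "i < K" and i: "g i \<le> a" "a \<le> g (Suc i)"
    using exists_bracketing_step \<open>0 < K\<close> by blast
  have "real b \<le> real N / a"
    using \<open>a * b \<le> N\<close> ab(2) by (simp add: field_simps flip: of_nat_mult)
  also have "\<dots> \<le> real N / g i"
    using i(1) ab(2) \<open>1 \<le> N\<close> by (intro divide_left_mono mult_pos_pos) (auto simp: g_def)
  also have "\<dots> = real N powr (1 - real i / K)"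
    using \<open>1 \<le> N\<close> by (simp add: g_def powr_diff)
  finally have "b \<le> nat \<lfloor>real N powr (1 - real i / K)\<rfloor>"
    by (rule le_nat_floor)
  moreover have "a \<le> nat \<lfloor>real N powr (real (Suc i) / K)\<rfloor>"
    using i(2) unfolding g_def by (rule le_nat_floor)
  ultimately show "x \<in> (\<Union>i<K. (\<lambda>(a, b). a * b) `
           ((A \<inter> {1..nat \<lfloor>real N powr (real (Suc i) / K)\<rfloor>}) \<times>
            (A \<inter> {1..nat \<lfloor>real N powr (1 - real i / K)\<rfloor>})))"
    using ab \<open>i < K\<close> by force
qed

lemma card_prodset_upto_le_powr:
  fixes C t :: real and K N :: nat
  assumes bound: "\<And>X. 1 \<le> X \<Longrightarrow> real (count_fn A X) \<le> C * X powr t"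
    and "0 \<le> t" and "0 < K" and "1 \<le> N"
  shows "real (card (prodset A \<inter> {1..N})) \<le> K * C\<^sup>2 * real N powr (t * (1 + 1 / K))"
proof -
  define Y where "Y i = real N powr (real (Suc i) / K)" for i
  define Z where "Z i = real N powr (1 - real i / K)" for i
  have "card (prodset A \<inter> {1..N}) \<le>
      card (\<Union>i<K. (\<lambda>(a, b). a * b) ` ((A \<inter> {1..nat \<lfloor>Y i\<rfloor>}) \<times> (A \<inter> {1..nat \<lfloor>Z i\<rfloor>})))"
    using prodset_upto_subset_UN[OF \<open>0 < K\<close> \<open>1 \<le> N\<close>, of A]
    unfolding Y_def Z_def by (intro card_mono) auto
  also have "\<dots> \<le> (\<Sum>i<K. card ((\<lambda>(a, b). a * b) ` ((A \<inter> {1..nat \<lfloor>Y i\<rfloor>}) \<times> (A \<inter> {1..nat \<lfloor>Z i\<rfloor>}))))"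
    by (rule card_UN_le) simp
  also have "\<dots> \<le> (\<Sum>i<K. count_fn A (Y i) * count_fn A (Z i))"
    by (intro sum_mono order.trans[OF card_image_le])
      (simp_all add: card_cartesian_product count_fn_eq_card)
  finally have "real (card (prodset A \<inter> {1..N})) \<le> (\<Sum>i<K. real (count_fn A (Y i)) * real (count_fn A (Z i)))"
    by (simp flip: of_nat_mult of_nat_sum)
  also have "\<dots> \<le> (\<Sum>i<K. C\<^sup>2 * real N powr (t * (1 + 1 / K)))"
  proof (rule sum_mono)
    fix i assume "i \<in> {..<K}"
    then have "1 \<le> Y i" "1 \<le> Z i"
      using \<open>1 \<le> N\<close> by (auto simp: Y_def Z_def intro!: ge_one_powr_ge_zero)
    then have "real (count_fn A (Y i)) * real (count_fn A (Z i)) \<le> (C * Y i powr t) * (C * Z i powr t)"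
      by (intro mult_mono bound) (auto intro: order.trans[OF _ bound])
    also have "\<dots> = C\<^sup>2 * (Y i powr t * Z i powr t)"
      by (simp add: power2_eq_square)
    also have "Y i powr t * Z i powr t = real N powr (real (Suc i) / K * t + (1 - real i / K) * t)"
      by (simp add: Y_def Z_def powr_powr powr_add)
    also have "real (Suc i) / K * t + (1 - real i / K) * t = t * (1 + 1 / K)"
      using \<open>0 < K\<close> by (simp add: field_simps)
    finally show "real (count_fn A (Y i)) * real (count_fn A (Z i)) \<le> C\<^sup>2 * real N powr (t * (1 + 1 / K))" .
  qed
  finally show ?thesis
    by simp
qed

lemma less_card_prodset_upto_mult_count_fn:
  assumes "sumset (prodset A) A = UNIV" and "0 \<le> X"
  shows "X < (real (card (prodset A \<inter> {1..nat \<lfloor>X\<rfloor>})) + 1) * (real (count_fn A X) + 1)"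
proof -
  have "X < real (nat \<lfloor>X\<rfloor> + 1)"
    using \<open>0 \<le> X\<close> by linarith
  also have "\<dots> \<le> real ((card (prodset A \<inter> {1..nat \<lfloor>X\<rfloor>}) + 1) * (count_fn A X + 1))"
    unfolding count_fn_eq_card of_nat_le_iff
    by (rule card_upto_le_sumset_prodset) (simp add: assms(1))
  finally show ?thesis
    by (simp add: algebra_simps)
qed

lemma growth_exponent_ge_one_third:
  fixes s D :: real
  assumes cover: "sumset (prodset A) A = UNIV" and "0 \<le> s"
    and lower: "\<exists>\<^sub>F X in at_top. real (count_fn A X) \<le> D * X powr s"
  shows "1/3 \<le> s"
proof (rule ccontr)
  assume "\<not> 1/3 \<le> s"
  have bound: "X \<le> (D + 1) ^ 3 * X powr (3 * s)"
    if "1 \<le> X" and "real (count_fn A X) \<le> D * X powr s" for X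
  proof -
    define c where "c = real (count_fn A X)"
    have "0 \<le> c"
      by (simp add: c_def)
    have "1 \<le> X powr s"
      using \<open>1 \<le> X\<close> \<open>0 \<le> s\<close> by (rule ge_one_powr_ge_zero)
    with that(2) have "c + 1 \<le> (D + 1) * X powr s"
      by (simp add: c_def algebra_simps)
    have "real (card (prodset A \<inter> {1..nat \<lfloor>X\<rfloor>})) \<le> c\<^sup>2"
      using card_prodset_upto_le_square[of A "nat \<lfloor>X\<rfloor>"]
      unfolding c_def count_fn_eq_card by (simp flip: of_nat_power)
    have "X < (real (card (prodset A \<inter> {1..nat \<lfloor>X\<rfloor>})) + 1) * (c + 1)"
      using less_card_prodset_upto_mult_count_fn[OF cover, of X] \<open>1 \<le> X\<close>
      unfolding c_def by simp
    also have "\<dots> \<le> (c\<^sup>2 + 1) * (c + 1)"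
      using \<open>real (card (prodset A \<inter> {1..nat \<lfloor>X\<rfloor>})) \<le> c\<^sup>2\<close> \<open>0 \<le> c\<close>
      by (intro mult_right_mono) auto
    also have "\<dots> \<le> (c + 1) ^ 3"
      using \<open>0 \<le> c\<close> by (simp add: power2_eq_square power3_eq_cube algebra_simps)
    also have "\<dots> \<le> ((D + 1) * X powr s) ^ 3"
      using \<open>c + 1 \<le> (D + 1) * X powr s\<close> \<open>0 \<le> c\<close> by (intro power_mono) auto
    also have "\<dots> = (D + 1) ^ 3 * X powr (3 * s)"
      using \<open>1 \<le> X\<close> by (simp add: power_mult_distrib powr_power)
    finally show ?thesis
      by simp
  qed
  have "\<not> (\<exists>\<^sub>F X in at_top. real (count_fn A X) \<le> D * X powr s)"
    using \<open>\<not> 1/3 \<le> s\<close> bound by (intro not_frequently_if_sublinear[of "3 * s"]) auto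
  with lower show False
    by contradiction
qed

lemma growth_exponents_sum_ge_one:
  fixes s t C D :: real
  assumes cover: "sumset (prodset A) A = UNIV" and "0 \<le> s" and "0 \<le> t"
    and upper: "\<And>X. 1 \<le> X \<Longrightarrow> real (count_fn A X) \<le> C * X powr t"
    and lower: "\<exists>\<^sub>F X in at_top. real (count_fn A X) \<le> D * X powr s"
  shows "1 \<le> s + t"
proof (rule ccontr)
  assume "\<not> 1 \<le> s + t"
  then obtain K :: nat where "t < K * (1 - s - t)"
    using ex_less_of_nat_mult[of "1 - s - t" t] by auto
  with \<open>0 \<le> t\<close> \<open>\<not> 1 \<le> s + t\<close> have "0 < K"
    by (cases "K = 0") auto
  define a where "a = t * (1 + 1 / K)"
  have "0 \<le> a"
    using \<open>0 \<le> t\<close> by (simp add: a_def)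
  have "a + s < 1"
    using \<open>t < K * (1 - s - t)\<close> \<open>0 < K\<close> by (simp add: a_def field_simps)
  have bound: "X \<le> ((K * C\<^sup>2 + 1) * (D + 1)) * X powr (a + s)"
    if "1 \<le> X" and "real (count_fn A X) \<le> D * X powr s" for X
  proof -
    define p where "p = real (card (prodset A \<inter> {1..nat \<lfloor>X\<rfloor>}))"
    have "1 \<le> X powr a" "1 \<le> X powr s"
      using \<open>1 \<le> X\<close> \<open>0 \<le> a\<close> \<open>0 \<le> s\<close> by (auto intro: ge_one_powr_ge_zero)
    have "p \<le> K * C\<^sup>2 * real (nat \<lfloor>X\<rfloor>) powr a"
      unfolding p_def a_def using \<open>1 \<le> X\<close> le_nat_floor[of 1 X]
      by (intro card_prodset_upto_le_powr[OF upper \<open>0 \<le> t\<close> \<open>0 < K\<close>]) auto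
    also have "\<dots> \<le> K * C\<^sup>2 * X powr a"
      using \<open>0 \<le> a\<close> \<open>1 \<le> X\<close> by (intro mult_left_mono powr_mono2) auto
    finally have "p + 1 \<le> (K * C\<^sup>2 + 1) * X powr a"
      using \<open>1 \<le> X powr a\<close> by (simp add: algebra_simps)
    moreover have "real (count_fn A X) + 1 \<le> (D + 1) * X powr s"
      using that(2) \<open>1 \<le> X powr s\<close> by (simp add: algebra_simps)
    ultimately have "(p + 1) * (real (count_fn A X) + 1) \<le> (K * C\<^sup>2 + 1) * X powr a * ((D + 1) * X powr s)"
      by (intro mult_mono) (auto simp: p_def)
    also have "\<dots> = ((K * C\<^sup>2 + 1) * (D + 1)) * X powr (a + s)"
      by (simp add: powr_add)
    finally show ?thesis
      using less_card_prodset_upto_mult_count_fn[OF cover, of X] \<open>1 \<le> X\<close>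
      unfolding p_def by simp
  qed
  have "\<not> (\<exists>\<^sub>F X in at_top. real (count_fn A X) \<le> D * X powr s)"
    using \<open>a + s < 1\<close> bound by (intro not_frequently_if_sublinear[of "a + s"]) auto
  with lower show False
    by contradiction
qed

theorem proposition3p1:
  fixes A :: "nat set"
  assumes "sumset (prodset A) A = UNIV"
  shows "lower_exp A \<ge> 1/3 \<and> upper_exp A \<ge> 1/2 \<and> lower_exp A + upper_exp A \<ge> 1"
proof -
  have lower: "1/3 \<le> lower_exp A"
  proof (rule le_lower_exp)
    fix s assume "0 \<le> s" and "Liminf at_top (count_ratio A s) < \<infinity>"
    then obtain D where "\<exists>\<^sub>F X in at_top. real (count_fn A X) \<le> D * X powr s"
      by (blast elim: Liminf_count_ratio_finiteD)
    with assms \<open>0 \<le> s\<close> show "1/3 \<le> s"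
      by (rule growth_exponent_ge_one_third)
  qed
  have lower_plus_upper: "1 \<le> lower_exp A + upper_exp A"
  proof (rule le_lower_exp_plus_upper_exp)
    fix s t
    assume "0 \<le> s" and "0 \<le> t"
      and "Liminf at_top (count_ratio A s) < \<infinity>" and "Limsup at_top (count_ratio A t) < \<infinity>"
    then obtain C D where upper: "\<And>X. 1 \<le> X \<Longrightarrow> real (count_fn A X) \<le> C * X powr t"
      and lower: "\<exists>\<^sub>F X in at_top. real (count_fn A X) \<le> D * X powr s"
      by (metis Liminf_count_ratio_finiteD Limsup_count_ratio_finiteD)
    show "1 \<le> s + t"
      by (rule growth_exponents_sum_ge_one[OF assms \<open>0 \<le> s\<close> \<open>0 \<le> t\<close> upper lower])
  qed
  with lower lower_exp_le_upper_exp[of A] show ?thesis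
    by linarith
qed

end
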